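(* Let $\underline n=(n_1,\dots,n_d)$ be a tuple of positive integers and suppose the knight graph $\mathcal{G}_{\underline n}$ contains a bi-sited Hamiltonian cycle. Let $k\geq 2$ be an integer and $\underline m=(n_1,\dots,n_d,k)$. Then $\mathcal{G}_{\underline m}$ contains a bi-sited Hamiltonian cycle.
   Context: For a tuple $\underline n=(n_1,\dots,n_d)$ of positive integers, the board is $\mathcal{B}_{\underline n}=\{1,\dots,n_1\}\times\cdots\times\{1,\dots,n_d\}$. Let $\mathcal{C}_d$ be the set of vectors in $\mathbb{Z}^d$ with exactly one coordinate in $\{\pm1\}$, exactly one coordinate in $\{\pm2\}$ and all other coordinates $0$ (knight moves). The knight graph $\mathcal{G}_{\underline n}$ has vertex set $\mathcal{B}_{\underline n}$, with $a,b$ adjacent iff $a-b\in\mathcal{C}_d$. Let $e_1,\dots,e_d$ be the standard basis of $\mathbb{R}^d$. For $c\in\mathcal{C}_d$ let $e_{[c,1]}$ (resp. $e_{[c,2]}$) be the standard basis vector of the coordinate where $c$ has entry $\pm1$ (resp. $\pm2$), and let $\tilde c=-\langle c,e_{[c,1]}\rangle e_{[c,1]}+\langle c,e_{[c,2]}\rangle e_{[c,2]}$ (i.e. $c$ with the sign of its $\pm1$ entry flipped). Let $(a^i)_{i\in I}$, $I=\{1,\dots,N\}$, be a Hamiltonian cycle, indices taken modulo $N$. A quadruple built from two edges $\{a^n,a^{n+1}\}$, $\{a^m,a^{m+1}\}$ of the cycle is a \emph{site} if for some $c\in\mathcal{C}_d$ and some $i$ one of the following holds: (wopp) $a^{n+1}=a^n+c$,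 $a^m=a^{m+1}+c$, and $a^m-a^{n+1}=a^{m+1}-a^n\in\{\pm2e_i\}$; (nwopp) $a^{n+1}=a^n+c$, $a^{m+1}=a^m+c$, and $a^m-a^n=a^{m+1}-a^{n+1}\in\{\pm2e_i\}$; (wocp) $a^{n+1}=a^n+c$, $a^{m+1}=a^m+\tilde c$, and $a^m-a^n=\langle c,e_{[c,1]}\rangle e_{[c,1]}$; (nwocp) $a^{n+1}=a^n+c$, $a^m=a^{m+1}+\tilde c$, and $a^{m+1}-a^n=\langle c,e_{[c,1]}\rangle e_{[c,1]}$. The support of the site is $\{a^n,a^{n+1},a^m,a^{m+1}\}$. A Hamiltonian cycle is \emph{bi-sited} if it contains two sites whose supports are disjoint (the endpoints of the four edges are pairwise distinct). *)

theory Defs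
  imports Main
begin

text \<open>Points of Z^d are represented as integer lists of length d; a tuple
  (n_1,...,n_d) is a list of naturals.\<close>

definition board :: "nat list \<Rightarrow> int list set" where
  "board ns = {a. length a = length ns \<and>
      (\<forall>i<length ns. 1 \<le> a ! i \<and> a ! i \<le> int (ns ! i))}"

definition vadd :: "int list \<Rightarrow> int list \<Rightarrow> int list" where
  "vadd u v = map2 (+) u v"

definition vsub :: "int list \<Rightarrow> int list \<Rightarrow> int list" where
  "vsub u v = map2 (-) u v"

definition unitv :: "nat \<Rightarrow> nat \<Rightarrow> int list" where
  "unitv d i = map (\<lambda>l. if l = i then 1 else 0) [0..<d]"

definition knight_moves :: "nat \<Rightarrow> int list set" where
  "knight_moves d = {c. length c = d \<and>
      (\<exists>i<d. \<exists>j<d. i \<noteq> j \<and> \<bar>c ! i\<bar> = 1 \<and> \<bar>c ! j\<bar> = 2 \<and>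
         (\<forall>l<d. l \<noteq> i \<longrightarrow> l \<noteq> j \<longrightarrow> c ! l = 0))}"

definition knight_adj :: "nat list \<Rightarrow> int list \<Rightarrow> int list \<Rightarrow> bool" where
  "knight_adj ns a b \<longleftrightarrow> a \<in> board ns \<and> b \<in> board ns \<and>
      vsub a b \<in> knight_moves (length ns)"

definition ctilde :: "int list \<Rightarrow> int list" where
  "ctilde c = map (\<lambda>x. if \<bar>x\<bar> = 1 then - x else x) c"

definition cpart1 :: "int list \<Rightarrow> int list" where
  "cpart1 c = map (\<lambda>x. if \<bar>x\<bar> = 1 then x else 0) c"

definition ham_cycle :: "nat list \<Rightarrow> int list list \<Rightarrow> bool" where
  "ham_cycle ns cyc \<longleftrightarrow> length cyc \<ge> 3 \<and> distinct cyc \<and> set cyc = board ns \<and>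
     (\<forall>i<length cyc. knight_adj ns (cyc ! i) (cyc ! ((i + 1) mod length cyc)))"

definition cyc_at :: "int list list \<Rightarrow> nat \<Rightarrow> int list" where
  "cyc_at cyc i = cyc ! (i mod length cyc)"

definition is_site :: "nat list \<Rightarrow> int list list \<Rightarrow> nat \<Rightarrow> nat \<Rightarrow> bool" where
  "is_site ns cyc n m \<longleftrightarrow>
    (let d = length ns; an = cyc_at cyc n; an1 = cyc_at cyc (n + 1);
         am = cyc_at cyc m; am1 = cyc_at cyc (m + 1) in
     \<exists>c \<in> knight_moves d. \<exists>i<d.
       (an1 = vadd an c \<and> am = vadd am1 c \<and> vsub am an1 = vsub am1 an \<and>
          (vsub am an1 = map ((*) 2) (unitv d i) \<or> vsub am an1 = map ((*) (-2)) (unitv d i)))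
     \<or> (an1 = vadd an c \<and> am1 = vadd am c \<and> vsub am an = vsub am1 an1 \<and>
          (vsub am an = map ((*) 2) (unitv d i) \<or> vsub am an = map ((*) (-2)) (unitv d i)))
     \<or> (an1 = vadd an c \<and> am1 = vadd am (ctilde c) \<and> vsub am an = cpart1 c)
     \<or> (an1 = vadd an c \<and> am = vadd am1 (ctilde c) \<and> vsub am1 an = cpart1 c))"

definition site_support :: "int list list \<Rightarrow> nat \<Rightarrow> nat \<Rightarrow> int list set" where
  "site_support cyc n m = {cyc_at cyc n, cyc_at cyc (n + 1), cyc_at cyc m, cyc_at cyc (m + 1)}"

definition bisited :: "nat list \<Rightarrow> int list list \<Rightarrow> bool" where
  "bisited ns cyc \<longleftrightarrow> (\<exists>n1 m1 n2 m2. is_site ns cyc n1 m1 \<and> is_site ns cyc n2 m2 \<and>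
     distinct [cyc_at cyc n1, cyc_at cyc (n1 + 1), cyc_at cyc m1, cyc_at cyc (m1 + 1),
               cyc_at cyc n2, cyc_at cyc (n2 + 1), cyc_at cyc m2, cyc_at cyc (m2 + 1)])"

definition has_bisited_ham_cycle :: "nat list \<Rightarrow> bool" where
  "has_bisited_ham_cycle ns \<longleftrightarrow> (\<exists>cyc. ham_cycle ns cyc \<and> bisited ns cyc)"

end

theory Submission
  imports Defs
begin

text \<open>Cut the given Hamiltonian cycle at the two edges \<open>(x, y)\<close> and \<open>(z, w)\<close> of one of its
  sites into an arc \<open>A\<close> from \<open>y\<close> to \<open>z\<close> and an arc \<open>B\<close> from \<open>w\<close> to \<open>x\<close>.  Because of the site,
  \<open>x, w\<close> and \<open>y, z\<close>, or else \<open>x, z\<close> and \<open>y, w\<close>, differ by twice a unit vector, and two such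
  points placed in adjacent layers of the board with one more coordinate are a knight move
  apart.  This allows a Hamiltonian cycle through the layers \<open>1, \<dots>, k\<close> that climbs through
  one arc in each layer, traverses the old cycle (minus one edge) in the top layer and
  descends through the other arcs, reversing direction in alternate layers if necessary.
  All other edges of the old cycle reappear in the bottom and in the top layer, so the second
  site survives in both of them, and the two copies are disjoint.\<close>

section \<open>Knight moves and sites\<close>

lemma length_vadd [simp]: "length (vadd u v) = min (length u) (length v)"
  by (simp add: vadd_def)

lemma length_vsub [simp]: "length (vsub u v) = min (length u) (length v)"
  by (simp add: vsub_def)

lemma nth_vadd [simp]: "i < length u \<Longrightarrow> i < length v \<Longrightarrow> vadd u v ! i = u ! i + v ! i"
  by (simp add: vadd_def)

lemma nth_vsub [simp]: "i < length u \<Longrightarrow> i < length v \<Longrightarrow> vsub u v ! i = u ! i - v ! i"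
  by (simp add: vsub_def)

lemma vadd_snoc: "length u = length v \<Longrightarrow> vadd (u @ [a]) (v @ [b]) = vadd u v @ [a + b]"
  by (simp add: vadd_def)

lemma vsub_snoc: "length u = length v \<Longrightarrow> vsub (u @ [a]) (v @ [b]) = vsub u v @ [a - b]"
  by (simp add: vsub_def)

lemma length_unitv [simp]: "length (unitv d i) = d"
  by (simp add: unitv_def)

lemma nth_unitv [simp]: "l < d \<Longrightarrow> unitv d i ! l = (if l = i then 1 else 0)"
  by (simp add: unitv_def)

lemma unitv_Suc: "i < d \<Longrightarrow> unitv (Suc d) i = unitv d i @ [0]"
  by (simp add: unitv_def)

lemma length_ctilde [simp]: "length (ctilde c) = length c"
  by (simp add: ctilde_def)

lemma nth_ctilde [simp]:
  "l < length c \<Longrightarrow> ctilde c ! l = (if \<bar>c ! l\<bar> = 1 then - (c ! l) else c ! l)"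
  by (simp add: ctilde_def)

lemma length_cpart1 [simp]: "length (cpart1 c) = length c"
  by (simp add: cpart1_def)

lemma nth_cpart1 [simp]: "l < length c \<Longrightarrow> cpart1 c ! l = (if \<bar>c ! l\<bar> = 1 then c ! l else 0)"
  by (simp add: cpart1_def)

lemma list_eq_iff_nth_eq_of_length:
  "length xs = d \<Longrightarrow> length ys = d \<Longrightarrow> xs = ys \<longleftrightarrow> (\<forall>l<d. xs ! l = ys ! l)"
  by (metis list_eq_iff_nth_eq)

lemma length_knight_move: "c \<in> knight_moves d \<Longrightarrow> length c = d"
  by (simp add: knight_moves_def)

lemma uminus_knight_move: "c \<in> knight_moves d \<Longrightarrow> map uminus c \<in> knight_moves d"
  unfolding knight_moves_def by (auto 0 3)

lemma knight_movesI:
  assumes "length c = d" and "i < d" "j < d" "i \<noteq> j" and "\<bar>c ! i\<bar> = 1" "\<bar>c ! j\<bar> = 2"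
    and "\<forall>l<d. l \<noteq> i \<longrightarrow> l \<noteq> j \<longrightarrow> c ! l = 0"
  shows "c \<in> knight_moves d"
  using assms unfolding knight_moves_def by blast

lemma knight_move_snoc_zero:
  assumes "c \<in> knight_moves d"
  shows "c @ [0] \<in> knight_moves (Suc d)"
proof -
  obtain i j where "length c = d" "i < d" "j < d" "i \<noteq> j" "\<bar>c ! i\<bar> = 1" "\<bar>c ! j\<bar> = 2"
    and "\<forall>l<d. l \<noteq> i \<longrightarrow> l \<noteq> j \<longrightarrow> c ! l = 0"
    using assms unfolding knight_moves_def by blast
  then show ?thesis
    by (intro knight_movesI[of _ _ i j]) (auto simp: nth_append less_Suc_eq)
qed

lemma knight_adj_commute: "knight_adj ns a b \<longleftrightarrow> knight_adj ns b a"
proof -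
  have "knight_adj ns b a" if "knight_adj ns a b" for a b
  proof -
    have "length a = length ns" "length b = length ns"
      using that by (auto simp: knight_adj_def board_def)
    then have "vsub b a = map uminus (vsub a b)"
      by (simp add: list_eq_iff_nth_eq)
    then show ?thesis
      using that uminus_knight_move unfolding knight_adj_def by metis
  qed
  then show ?thesis by blast
qed

definition double_unit :: "nat \<Rightarrow> int list \<Rightarrow> bool" where
  "double_unit d v \<longleftrightarrow> (\<exists>i<d. \<exists>s. \<bar>s\<bar> = 2 \<and> v = map ((*) s) (unitv d i))"

lemma double_unit_snoc_knight_move:
  assumes "double_unit d v" and "\<bar>a\<bar> = 1"
  shows "v @ [a] \<in> knight_moves (Suc d)"
proof -
  obtain i s where "i < d" "\<bar>s\<bar> = 2" "v = map ((*) s) (unitv d i)"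
    using assms(1) unfolding double_unit_def by blast
  with assms(2) show ?thesis
    by (intro knight_movesI[of _ _ d i]) (auto simp: nth_append less_Suc_eq)
qed

lemma double_unit_knight_move_part:
  assumes "c \<in> knight_moves d" and "length v = d" and "\<bar>s\<bar> = 1"
    and "\<forall>l<d. v ! l = s * (if \<bar>c ! l\<bar> = 1 then 0 else c ! l)"
  shows "double_unit d v"
proof -
  obtain i j where ij: "i < d" "j < d" "i \<noteq> j" "\<bar>c ! i\<bar> = 1" "\<bar>c ! j\<bar> = 2"
    and zero: "\<forall>l<d. l \<noteq> i \<longrightarrow> l \<noteq> j \<longrightarrow> c ! l = 0"
    using assms(1) unfolding knight_moves_def by blast
  have "v ! l = (if l = j then s * c ! j else 0)" if "l < d" for l
    using assms(4) ij zero that by (cases "l = i") auto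
  then have "v = map ((*) (s * c ! j)) (unitv d j)"
    using assms(2) by (simp add: list_eq_iff_nth_eq)
  moreover have "\<bar>s * c ! j\<bar> = 2"
    using ij assms(3) by (simp add: abs_mult)
  ultimately show ?thesis
    unfolding double_unit_def using \<open>j < d\<close> by blast
qed

definition site_with :: "nat \<Rightarrow> int list \<Rightarrow> nat \<Rightarrow> int list \<Rightarrow> int list \<Rightarrow> int list \<Rightarrow> int list \<Rightarrow> bool" where
  "site_with d c i an an1 am am1 \<longleftrightarrow>
       (an1 = vadd an c \<and> am = vadd am1 c \<and> vsub am an1 = vsub am1 an \<and>
          (vsub am an1 = map ((*) 2) (unitv d i) \<or> vsub am an1 = map ((*) (-2)) (unitv d i)))
     \<or> (an1 = vadd an c \<and> am1 = vadd am c \<and> vsub am an = vsub am1 an1 \<and>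
          (vsub am an = map ((*) 2) (unitv d i) \<or> vsub am an = map ((*) (-2)) (unitv d i)))
     \<or> (an1 = vadd an c \<and> am1 = vadd am (ctilde c) \<and> vsub am an = cpart1 c)
     \<or> (an1 = vadd an c \<and> am = vadd am1 (ctilde c) \<and> vsub am1 an = cpart1 c)"

definition site_quad :: "nat \<Rightarrow> int list \<Rightarrow> int list \<Rightarrow> int list \<Rightarrow> int list \<Rightarrow> bool" where
  "site_quad d an an1 am am1 \<longleftrightarrow> (\<exists>c\<in>knight_moves d. \<exists>i<d. site_with d c i an an1 am am1)"

lemma is_site_iff_site_quad:
  "is_site ns L n m \<longleftrightarrow>
     site_quad (length ns) (cyc_at L n) (cyc_at L (Suc n)) (cyc_at L m) (cyc_at L (Suc m))"
  unfolding is_site_def site_quad_def site_with_def Let_def by simp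

lemma site_quad_converse:
  assumes "site_quad d p q r s"
    and "length p = d" "length q = d" "length r = d" "length s = d"
  shows "site_quad d q p s r"
proof -
  obtain c i where c: "c \<in> knight_moves d" "i < d" and site: "site_with d c i p q r s"
    using assms(1) unfolding site_quad_def by blast
  have "length c = d"
    using c(1) by (rule length_knight_move)
  with site assms(2-5) have "site_with d (map uminus c) i q p s r"
    unfolding site_with_def
    by (elim disjE conjE) (simp_all add: list_eq_iff_nth_eq_of_length[where d = d])
  then show ?thesis
    using uminus_knight_move[OF c(1)] c(2) unfolding site_quad_def by blast
qed

lemma site_quad_snoc:
  assumes "site_quad d p q r s"
    and "length p = d" "length q = d" "length r = d" "length s = d"
  shows "site_quad (Suc d) (p @ [a]) (q @ [a]) (r @ [a]) (s @ [a])"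
proof -
  obtain c i where c: "c \<in> knight_moves d" "i < d" and site: "site_with d c i p q r s"
    using assms(1) unfolding site_quad_def by blast
  have "length c = d"
    using c(1) by (rule length_knight_move)
  with site assms(2-5) c(2) have "site_with (Suc d) (c @ [0]) i (p @ [a]) (q @ [a]) (r @ [a]) (s @ [a])"
    unfolding site_with_def
    by (simp add: vadd_snoc vsub_snoc unitv_Suc ctilde_def cpart1_def)
  then show ?thesis
    using knight_move_snoc_zero[OF c(1)] c(2) less_SucI unfolding site_quad_def by blast
qed

lemma site_quad_links:
  assumes "site_quad d x y z w"
    and "length x = d" "length y = d" "length z = d" "length w = d"
  shows "double_unit d (vsub w x) \<and> double_unit d (vsub z y) \<or>
         double_unit d (vsub z x) \<and> double_unit d (vsub w y)"
proof -
  obtain c i where c: "c \<in> knight_moves d" "i < d" and site: "site_with d c i x y z w"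
    using assms(1) unfolding site_quad_def by blast
  have "length c = d"
    using c(1) by (rule length_knight_move)
  have y: "y = vadd x c"
    using site unfolding site_with_def by blast
  have unit: "double_unit d v"
    if "v = map ((*) 2) (unitv d i) \<or> v = map ((*) (-2)) (unitv d i)" for v
    using that c(2) unfolding double_unit_def by force
  \<comment> \<open>Here \<open>z' - x\<close> is the \<open>\<plusminus>1\<close> part of \<open>c\<close>, so \<open>w' - x\<close> and \<open>z' - y\<close> are \<open>\<plusminus>\<close> its \<open>\<plusminus>2\<close> part.\<close>
  have crossing: "double_unit d (vsub w' x) \<and> double_unit d (vsub z' y)"
    if w': "w' = vadd z' (ctilde c)" and z'x: "vsub z' x = cpart1 c" and "length z' = d" for z' w'
  proof -
    have diff: "z' ! l = x ! l + (if \<bar>c ! l\<bar> = 1 then c ! l else 0)" if "l < d" for l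
      using arg_cong[OF z'x, of "\<lambda>v. v ! l"] that \<open>length z' = d\<close> assms(2) \<open>length c = d\<close>
      by simp
    have "double_unit d (vsub w' x)"
      by (rule double_unit_knight_move_part[OF c(1), of _ 1])
        (use w' \<open>length z' = d\<close> assms(2) \<open>length c = d\<close> in \<open>auto simp: diff\<close>)
    moreover have "double_unit d (vsub z' y)"
      by (rule double_unit_knight_move_part[OF c(1), of _ "-1"])
        (use y \<open>length z' = d\<close> assms(2) \<open>length c = d\<close> in \<open>auto simp: diff\<close>)
    ultimately show ?thesis ..
  qed
  from site consider
      (wopp) "vsub z y = vsub w x" "vsub z y = map ((*) 2) (unitv d i) \<or> vsub z y = map ((*) (-2)) (unitv d i)"
    | (nwopp) "vsub z x = vsub w y" "vsub z x = map ((*) 2) (unitv d i) \<or> vsub z x = map ((*) (-2)) (unitv d i)"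
    | (wocp) "w = vadd z (ctilde c)" "vsub z x = cpart1 c"
    | (nwocp) "z = vadd w (ctilde c)" "vsub w x = cpart1 c"
    unfolding site_with_def by blast
  then show ?thesis
  proof cases
    case wopp
    then show ?thesis using unit by simp
  next
    case nwopp
    then show ?thesis using unit by simp
  next
    case wocp
    then show ?thesis using crossing[of w z] assms(4) by blast
  next
    case nwocp
    then show ?thesis using crossing[of z w] assms(5) by blast
  qed
qed

section \<open>Edges of paths and cycles\<close>

fun path_edges :: "'a list \<Rightarrow> ('a \<times> 'a) set" where
  "path_edges [] = {}"
| "path_edges [_] = {}"
| "path_edges (u # v # vs) = insert (u, v) (path_edges (v # vs))"

lemma successively_iff_path_edges: "successively P xs \<longleftrightarrow> (\<forall>(u, v) \<in> path_edges xs. P u v)"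
  by (induction xs rule: path_edges.induct) auto

lemma path_edges_conv_nth: "path_edges xs = {(xs ! i, xs ! Suc i) | i. Suc i < length xs}"
proof -
  have "(u, v) \<in> path_edges xs \<longleftrightarrow> (\<exists>i. Suc i < length xs \<and> u = xs ! i \<and> v = xs ! Suc i)"
    for u v
    using successively_iff_path_edges[of "\<lambda>a b. (a, b) \<noteq> (u, v)" xs]
    by (auto simp: successively_conv_nth)
  then show ?thesis by auto
qed

lemma path_edges_subset: "path_edges xs \<subseteq> set xs \<times> set xs"
  by (induction xs rule: path_edges.induct) auto

lemma path_edges_append:
  "xs \<noteq> [] \<Longrightarrow> ys \<noteq> [] \<Longrightarrow>
     path_edges (xs @ ys) = path_edges xs \<union> path_edges ys \<union> {(last xs, hd ys)}"
proof (induction xs rule: path_edges.induct)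
  case (2 u)
  then show ?case by (cases ys) auto
qed auto

lemma path_edges_map: "path_edges (map f xs) = map_prod f f ` path_edges xs"
  by (induction xs rule: path_edges.induct) auto

lemma path_edges_rev: "path_edges (rev xs) = (path_edges xs)\<inverse>"
proof (induction xs rule: path_edges.induct)
  case (3 u v vs)
  then show ?case
    using path_edges_append[of "rev vs @ [v]" "[u]"] by auto
qed auto

lemma path_edges_split: "(u, v) \<in> path_edges xs \<Longrightarrow> \<exists>ys zs. xs = ys @ u # v # zs"
proof (induction xs rule: path_edges.induct)
  case (3 a b vs)
  then show ?case by (metis append_Cons append_Nil insert_iff path_edges.simps(3) prod.inject)
qed auto

definition cycle_edges :: "'a list \<Rightarrow> ('a \<times> 'a) set" where
  "cycle_edges xs = path_edges (xs @ [hd xs])"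

lemma cycle_edges_Nil [simp]: "cycle_edges [] = {}"
  by (simp add: cycle_edges_def)

lemma cycle_edges_eq: "xs \<noteq> [] \<Longrightarrow> cycle_edges xs = insert (last xs, hd xs) (path_edges xs)"
  by (auto simp: cycle_edges_def path_edges_append)

lemma path_edges_subset_cycle_edges: "path_edges xs \<subseteq> cycle_edges xs"
  by (cases "xs = []") (auto simp: cycle_edges_eq)

lemma cycle_edges_subset: "cycle_edges xs \<subseteq> set xs \<times> set xs"
  using path_edges_subset[of xs] by (cases "xs = []") (auto simp: cycle_edges_eq)

lemma cycle_edges_append:
  "xs \<noteq> [] \<Longrightarrow> ys \<noteq> [] \<Longrightarrow>
     cycle_edges (xs @ ys) = path_edges xs \<union> path_edges ys \<union> {(last xs, hd ys), (last ys, hd xs)}"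
  by (auto simp: cycle_edges_eq path_edges_append)

lemma cycle_edges_rotate1: "cycle_edges (rotate1 xs) = cycle_edges xs"
proof (cases xs)
  case (Cons u vs)
  then show ?thesis
    using cycle_edges_append[of vs "[u]"] cycle_edges_append[of "[u]" vs] by (cases "vs = []") auto
qed simp

lemma cycle_edges_rotate: "cycle_edges (rotate n xs) = cycle_edges xs"
  by (induction n) (simp_all add: cycle_edges_rotate1)

lemma cycle_edges_conv_nth:
  assumes "xs \<noteq> []"
  shows "cycle_edges xs = {(xs ! i, xs ! (Suc i mod length xs)) | i. i < length xs}"
proof -
  have "(xs @ [hd xs]) ! i = xs ! i" and "(xs @ [hd xs]) ! Suc i = xs ! (Suc i mod length xs)"
    if "i < length xs" for i
    using that assms by (cases "Suc i = length xs"; simp add: nth_append hd_conv_nth)+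
  then show ?thesis
    unfolding cycle_edges_def path_edges_conv_nth by force
qed

lemma cycle_edges_iff_cyc_at:
  assumes "xs \<noteq> []"
  shows "(u, v) \<in> cycle_edges xs \<longleftrightarrow> (\<exists>i. cyc_at xs i = u \<and> cyc_at xs (Suc i) = v)"
proof
  assume "(u, v) \<in> cycle_edges xs"
  then obtain i where "i < length xs" "u = xs ! i" "v = xs ! (Suc i mod length xs)"
    by (auto simp: cycle_edges_conv_nth[OF assms])
  then show "\<exists>i. cyc_at xs i = u \<and> cyc_at xs (Suc i) = v"
    by (intro exI[of _ i]) (simp add: cyc_at_def)
next
  assume "\<exists>i. cyc_at xs i = u \<and> cyc_at xs (Suc i) = v"
  then obtain i where "cyc_at xs i = u" "cyc_at xs (Suc i) = v"
    by blast
  then show "(u, v) \<in> cycle_edges xs"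
    unfolding cycle_edges_conv_nth[OF assms] cyc_at_def
    using assms by (intro CollectI exI[of _ "i mod length xs"]) (simp add: mod_Suc_eq)
qed

lemma cycle_edge_rotate_ends:
  assumes "(x, y) \<in> cycle_edges xs"
  obtains n where "last (rotate n xs) = x" and "hd (rotate n xs) = y"
proof -
  have "xs \<noteq> []"
    using assms by auto
  then obtain i where i: "i < length xs" "x = xs ! i" "y = xs ! (Suc i mod length xs)"
    using assms by (auto simp: cycle_edges_conv_nth)
  have "Suc i + (length xs - 1) = i + length xs"
    using i(1) by simp
  then have "(Suc i + (length xs - 1)) mod length xs = i"
    using i(1) by simp
  then have "last (rotate (Suc i) xs) = x"
    using \<open>xs \<noteq> []\<close> i by (simp add: last_conv_nth nth_rotate del: rotate_Suc)
  moreover have "hd (rotate (Suc i) xs) = y"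
    using \<open>xs \<noteq> []\<close> i by (simp add: hd_rotate_conv_nth del: rotate_Suc)
  ultimately show ?thesis by (rule that)
qed

lemma cycle_edges_split:
  assumes xy: "(x, y) \<in> cycle_edges C" and zw: "(z, w) \<in> cycle_edges C" and "w \<noteq> y"
  obtains A B where "A \<noteq> []" "B \<noteq> []" "hd A = y" "last A = z" "hd B = w" "last B = x"
    and "set (A @ B) = set C" "distinct (A @ B) = distinct C" "length (A @ B) = length C"
    and "cycle_edges (A @ B) = cycle_edges C"
proof -
  obtain n where ends: "last (rotate n C) = x" "hd (rotate n C) = y"
    using cycle_edge_rotate_ends[OF xy] by blast
  have "rotate n C \<noteq> []"
    using xy by auto
  then have "(z, w) \<in> path_edges (rotate n C)"
    using zw \<open>w \<noteq> y\<close> ends cycle_edges_rotate[of n C] by (auto simp: cycle_edges_eq)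
  then obtain us vs where R: "rotate n C = us @ z # w # vs"
    using path_edges_split by metis
  have "set (us @ z # w # vs) = set C" "distinct (us @ z # w # vs) = distinct C"
    "length (us @ z # w # vs) = length C" "cycle_edges (us @ z # w # vs) = cycle_edges C"
    unfolding R[symmetric] by (simp_all add: cycle_edges_rotate)
  moreover have "hd (us @ [z]) = y" "last (w # vs) = x"
    using ends unfolding R by (cases us; simp)+
  ultimately show ?thesis
    by (intro that[of "us @ [z]" "w # vs"]) simp_all
qed

lemma ham_cycle_iff_cycle_edges:
  "ham_cycle ns L \<longleftrightarrow>
     3 \<le> length L \<and> distinct L \<and> set L = board ns \<and> (\<forall>(u, v) \<in> cycle_edges L. knight_adj ns u v)"
proof (cases "L = []")
  case False
  have "(\<forall>(u, v) \<in> cycle_edges L. knight_adj ns u v) \<longleftrightarrow>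
      (\<forall>i<length L. knight_adj ns (L ! i) (L ! (Suc i mod length L)))"
    unfolding cycle_edges_conv_nth[OF False] by blast
  then show ?thesis
    unfolding ham_cycle_def by simp
qed (simp add: ham_cycle_def)

lemma ham_cycle_iff_successively:
  "ham_cycle ns L \<longleftrightarrow>
     3 \<le> length L \<and> distinct L \<and> set L = board ns \<and> successively (knight_adj ns) (L @ [hd L])"
  by (simp add: ham_cycle_iff_cycle_edges cycle_edges_def successively_iff_path_edges)

section \<open>Adding a layer to the board\<close>

definition lift :: "nat \<Rightarrow> int list \<Rightarrow> int list" where
  "lift t p = p @ [int t]"

lemma lift_eq_iff [simp]: "lift t p = lift s q \<longleftrightarrow> t = s \<and> p = q"
  by (auto simp: lift_def)

lemma board_snoc: "board (ns @ [K]) = (\<Union>t\<in>{1..K}. lift t ` board ns)"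
proof (intro equalityI subsetI)
  fix q
  assume q: "q \<in> board (ns @ [K])"
  then have "q \<noteq> []"
    by (auto simp: board_def)
  then obtain p a where qa: "q = p @ [a]"
    by (cases q rule: rev_cases) auto
  have "length p = length ns"
    using q qa by (simp add: board_def)
  have bounds: "1 \<le> q ! i \<and> q ! i \<le> int ((ns @ [K]) ! i)" if "i < Suc (length ns)" for i
    using q that by (simp add: board_def)
  have "p \<in> board ns"
    unfolding board_def
  proof (intro CollectI conjI allI impI)
    fix i
    assume "i < length ns"
    then show "1 \<le> p ! i" "p ! i \<le> int (ns ! i)"
      using bounds[of i] \<open>length p = length ns\<close> by (simp_all add: qa nth_append)
  qed (fact)
  moreover have "1 \<le> a" "a \<le> int K"
    using bounds[of "length ns"] \<open>length p = length ns\<close> by (simp_all add: qa nth_append)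
  ultimately show "q \<in> (\<Union>t\<in>{1..K}. lift t ` board ns)"
    unfolding qa lift_def by (intro UN_I[of "nat a"] image_eqI[of _ _ p]) auto
next
  fix q
  assume "q \<in> (\<Union>t\<in>{1..K}. lift t ` board ns)"
  then show "q \<in> board (ns @ [K])"
    by (auto simp: board_def lift_def nth_append less_Suc_eq)
qed

lemma lift_in_board: "p \<in> board ns \<Longrightarrow> t \<in> {1..K} \<Longrightarrow> lift t p \<in> board (ns @ [K])"
  unfolding board_snoc by blast

lemma knight_adj_lift:
  assumes "knight_adj ns p q" and "t \<in> {1..K}"
  shows "knight_adj (ns @ [K]) (lift t p) (lift t q)"
proof -
  have "p \<in> board ns" "q \<in> board ns" "vsub p q \<in> knight_moves (length ns)"
    using assms(1) by (auto simp: knight_adj_def)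
  moreover have "length p = length q"
    using \<open>p \<in> board ns\<close> \<open>q \<in> board ns\<close> by (simp add: board_def)
  ultimately show ?thesis
    using assms(2) lift_in_board knight_move_snoc_zero
    unfolding knight_adj_def by (simp add: lift_def vsub_snoc)
qed

lemma site_quad_lift:
  assumes "site_quad (length ns) p q r s" and "{p, q, r, s} \<subseteq> board ns"
  shows "site_quad (length (ns @ [K])) (lift t p) (lift t q) (lift t r) (lift t s)"
    and "site_quad (length (ns @ [K])) (lift t q) (lift t p) (lift t s) (lift t r)"
proof -
  have lengths: "length p = length ns" "length q = length ns" "length r = length ns" "length s = length ns"
    using assms(2) by (auto simp: board_def)
  show "site_quad (length (ns @ [K])) (lift t p) (lift t q) (lift t r) (lift t s)"
    using site_quad_snoc[OF assms(1) lengths] by (simp add: lift_def)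
  show "site_quad (length (ns @ [K])) (lift t q) (lift t p) (lift t s) (lift t r)"
    using site_quad_snoc[OF site_quad_converse[OF assms(1) lengths]] lengths by (simp add: lift_def)
qed

lemma knight_path_lift:
  "successively (knight_adj ns) xs \<Longrightarrow> t \<in> {1..K} \<Longrightarrow>
     successively (knight_adj (ns @ [K])) (map (lift t) xs)"
  unfolding successively_map by (erule successively_mono) (rule knight_adj_lift)

lemma successively_knight_adj_rev:
  "successively (knight_adj ns) (rev xs) \<longleftrightarrow> successively (knight_adj ns) xs"
  unfolding successively_iff_path_edges path_edges_rev using knight_adj_commute by blast

definition layer_link :: "nat list \<Rightarrow> int list \<Rightarrow> int list \<Rightarrow> bool" where
  "layer_link ns p q \<longleftrightarrow> p \<in> board ns \<and> q \<in> board ns \<and> double_unit (length ns) (vsub q p)"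

lemma knight_adj_layer_link:
  assumes "layer_link ns p q" and "1 \<le> t" and "Suc t \<le> K"
  shows "knight_adj (ns @ [K]) (lift (Suc t) q) (lift t p)"
    and "knight_adj (ns @ [K]) (lift t p) (lift (Suc t) q)"
proof -
  have "p \<in> board ns" "q \<in> board ns" "double_unit (length ns) (vsub q p)"
    using assms(1) by (auto simp: layer_link_def)
  moreover have "length p = length q"
    using \<open>p \<in> board ns\<close> \<open>q \<in> board ns\<close> by (simp add: board_def)
  moreover have "lift (Suc t) q \<in> board (ns @ [K])" "lift t p \<in> board (ns @ [K])"
    using lift_in_board assms(2,3) \<open>p \<in> board ns\<close> \<open>q \<in> board ns\<close> by auto
  ultimately show "knight_adj (ns @ [K]) (lift (Suc t) q) (lift t p)"
    using double_unit_snoc_knight_move[of "length ns" "vsub q p" 1]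
    unfolding knight_adj_def by (simp add: lift_def vsub_snoc)
  then show "knight_adj (ns @ [K]) (lift t p) (lift (Suc t) q)"
    using knight_adj_commute by blast
qed

section \<open>Stacking a cut Hamiltonian cycle\<close>

locale arc_split =
  fixes ns :: "nat list" and A B :: "int list list" and x y z w :: "int list"
  assumes ham_cycle: "ham_cycle ns (A @ B)"
    and arcs_ne: "A \<noteq> []" "B \<noteq> []"
    and arc_ends: "hd A = y" "last A = z" "hd B = w" "last B = x"
    and links: "layer_link ns x w \<and> layer_link ns y z \<or> layer_link ns x z \<and> layer_link ns y w"
begin

lemma set_arcs: "set A \<union> set B = board ns"
  using ham_cycle by (simp add: ham_cycle_def)

lemma knight_adj_arcs:
  "successively (knight_adj ns) A \<and> successively (knight_adj ns) B \<and>
   knight_adj ns z w \<and> knight_adj ns x y"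
proof -
  have "successively (knight_adj ns) (A @ B @ [y])"
    using ham_cycle arcs_ne arc_ends unfolding ham_cycle_iff_successively by simp
  then show ?thesis
    using arcs_ne arc_ends by (simp add: successively_append_iff)
qed

definition crossed :: bool where
  "crossed \<longleftrightarrow> layer_link ns x w \<and> layer_link ns y z"

definition oriented :: "'a list \<Rightarrow> 'a list" where
  "oriented xs = (if crossed then xs else rev xs)"

lemma oriented_simps [simp]:
  "set (oriented xs) = set xs" "distinct (oriented xs) = distinct xs"
  "length (oriented xs) = length xs" "oriented xs = [] \<longleftrightarrow> xs = []"
  by (simp_all add: oriented_def)

lemma path_edges_oriented:
  "path_edges (oriented xs) = path_edges xs \<or> path_edges (oriented xs) = (path_edges xs)\<inverse>"
  by (simp add: oriented_def path_edges_rev)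

text \<open>\<open>stack t r\<close> is a Hamiltonian path through the layers \<open>t, \<dots>, t + r\<close> from \<open>lift t w\<close> to
  \<open>lift t z\<close>: it runs along \<open>B\<close> in layer \<open>t\<close>, jumps to the next layer, returns along \<open>A\<close> in
  layer \<open>t\<close>, and in the top layer follows the whole old cycle without the edge \<open>(z, w)\<close>.\<close>

fun stack :: "nat \<Rightarrow> nat \<Rightarrow> int list list" where
  "stack t 0 = map (lift t) (B @ A)"
| "stack t (Suc r) = map (lift t) B @ oriented (stack (Suc t) r) @ map (lift t) A"

lemma stack_ends [simp]:
  "stack t r \<noteq> []" "hd (stack t r) = lift t w" "last (stack t r) = lift t z"
  by (cases r; simp add: arcs_ne arc_ends hd_map last_map)+

lemma length_stack: "length (A @ B) \<le> length (stack t r)"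
  by (induction r arbitrary: t) auto

lemma set_stack: "set (stack t r) = (\<Union>s\<in>{t..t + r}. lift s ` board ns)"
proof (induction r arbitrary: t)
  case 0
  then show ?case using set_arcs by auto
next
  case (Suc r)
  have "{t..t + Suc r} = insert t {Suc t..Suc t + r}"
    by auto
  then show ?case
    using Suc.IH[of "Suc t"] set_arcs by auto
qed

lemma distinct_stack: "distinct (stack t r)"
proof (induction r arbitrary: t)
  case 0
  then show ?case
    using ham_cycle by (auto simp: ham_cycle_def distinct_map inj_on_def)
next
  case (Suc r)
  have "set (stack (Suc t) r) \<inter> lift t ` board ns = {}"
    by (auto simp: set_stack)
  then show ?case
    using Suc.IH ham_cycle set_arcs by (auto simp: ham_cycle_def distinct_map inj_on_def)
qed

lemma knight_path_stack:
  "1 \<le> t \<Longrightarrow> t + r \<le> K \<Longrightarrow> successively (knight_adj (ns @ [K])) (stack t r)"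
proof (induction r arbitrary: t)
  case 0
  have "successively (knight_adj ns) (B @ A)"
    using knight_adj_arcs arcs_ne arc_ends by (simp add: successively_append_iff)
  then show ?case
    using knight_path_lift[of ns "B @ A" t K] 0 by simp
next
  case (Suc r)
  let ?S = "oriented (stack (Suc t) r)"
  have "successively (knight_adj (ns @ [K])) ?S"
    using Suc by (simp add: oriented_def successively_knight_adj_rev del: successively_rev)
  moreover have "knight_adj (ns @ [K]) (lift t x) (hd ?S)"
    and "knight_adj (ns @ [K]) (last ?S) (lift t y)"
    using links Suc.prems knight_adj_layer_link[of ns _ _ t K]
    by (auto simp: oriented_def crossed_def hd_rev last_rev)
  ultimately show ?case
    using Suc.prems knight_adj_arcs arcs_ne arc_ends
    by (simp add: successively_append_iff knight_path_lift last_map hd_map)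
qed

definition arc_edges :: "nat \<Rightarrow> (int list \<times> int list) set" where
  "arc_edges t = map_prod (lift t) (lift t) ` (path_edges A \<union> path_edges B)"

lemma arc_edges_stack: "arc_edges t \<subseteq> path_edges (stack t r)"
  by (cases r) (auto simp: arc_edges_def path_edges_append path_edges_map arcs_ne)

lemma top_arc_edges_stack:
  "arc_edges (t + r) \<subseteq> path_edges (stack t r) \<or> arc_edges (t + r) \<subseteq> (path_edges (stack t r))\<inverse>"
proof (induction r arbitrary: t)
  case 0
  then show ?case
    using arc_edges_stack[of t 0] by simp
next
  case (Suc r)
  have "path_edges (oriented (stack (Suc t) r)) \<subseteq> path_edges (stack t (Suc r))"
    by (auto simp: path_edges_append arcs_ne)
  then show ?case
    using Suc.IH[of "Suc t"] path_edges_oriented[of "stack (Suc t) r"] by auto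
qed

lemma ham_cycle_stack:
  assumes "2 \<le> k"
  shows "ham_cycle (ns @ [k]) (stack 1 (k - 1))"
  unfolding ham_cycle_iff_successively
proof (intro conjI)
  show "3 \<le> length (stack 1 (k - 1))"
    using length_stack[of 1 "k - 1"] ham_cycle by (simp add: ham_cycle_def)
  show "distinct (stack 1 (k - 1))"
    by (rule distinct_stack)
  show "set (stack 1 (k - 1)) = board (ns @ [k])"
    using assms by (simp add: set_stack board_snoc)
  show "successively (knight_adj (ns @ [k])) (stack 1 (k - 1) @ [hd (stack 1 (k - 1))])"
    using knight_path_stack[of 1 "k - 1" k] knight_adj_lift[of ns z w 1 k] knight_adj_arcs assms
    by (simp add: successively_append_iff)
qed

end

lemma layered_ham_cycle:
  assumes C: "ham_cycle ns C" and xy: "(x, y) \<in> cycle_edges C" and zw: "(z, w) \<in> cycle_edges C"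
    and site: "site_quad (length ns) x y z w" and "w \<noteq> y" and "2 \<le> k"
  obtains H where "ham_cycle (ns @ [k]) H"
    and "\<And>u v. (u, v) \<in> cycle_edges C - {(x, y), (z, w)} \<Longrightarrow> (lift 1 u, lift 1 v) \<in> cycle_edges H"
    and "(\<forall>u v. (u, v) \<in> cycle_edges C - {(x, y), (z, w)} \<longrightarrow> (lift k u, lift k v) \<in> cycle_edges H) \<or>
         (\<forall>u v. (u, v) \<in> cycle_edges C - {(x, y), (z, w)} \<longrightarrow> (lift k v, lift k u) \<in> cycle_edges H)"
proof -
  obtain A B where ends: "A \<noteq> []" "B \<noteq> []" "hd A = y" "last A = z" "hd B = w" "last B = x"
    and same: "set (A @ B) = set C" "distinct (A @ B) = distinct C" "length (A @ B) = length C"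
      "cycle_edges (A @ B) = cycle_edges C"
    using cycle_edges_split[OF xy zw \<open>w \<noteq> y\<close>] by blast
  have "{x, y, z, w} \<subseteq> board ns"
    using xy zw C cycle_edges_subset[of C] by (auto simp: ham_cycle_def)
  then have "layer_link ns x w \<and> layer_link ns y z \<or> layer_link ns x z \<and> layer_link ns y w"
    using site_quad_links[OF site] by (simp add: layer_link_def board_def)
  moreover have "ham_cycle ns (A @ B)"
    using C same by (simp add: ham_cycle_iff_cycle_edges)
  ultimately interpret arc_split ns A B x y z w
    using ends by unfold_locales
  let ?H = "stack 1 (k - 1)"
  have kept: "(lift t u, lift t v) \<in> arc_edges t" if "(u, v) \<in> cycle_edges C - {(x, y), (z, w)}" for t u v
  proof -
    have "(u, v) \<in> path_edges A \<union> path_edges B"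
      using that same(4) cycle_edges_append[of A B] ends by auto
    then show ?thesis
      unfolding arc_edges_def by force
  qed
  have "arc_edges 1 \<subseteq> cycle_edges ?H"
    using arc_edges_stack[of 1 "k - 1"] path_edges_subset_cycle_edges by blast
  moreover have "1 + (k - 1) = k"
    using \<open>2 \<le> k\<close> by simp
  then have "arc_edges k \<subseteq> cycle_edges ?H \<or> arc_edges k \<subseteq> (cycle_edges ?H)\<inverse>"
    using top_arc_edges_stack[of 1 "k - 1"] path_edges_subset_cycle_edges[of ?H] by auto
  ultimately show ?thesis
    using that[OF ham_cycle_stack[OF \<open>2 \<le> k\<close>]] kept by blast
qed

lemma bisitedE:
  assumes "bisited ns L" and "L \<noteq> []"
  obtains x y z w p q r s where "{(x, y), (z, w), (p, q), (r, s)} \<subseteq> cycle_edges L"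
    and "site_quad (length ns) x y z w" and "site_quad (length ns) p q r s"
    and "distinct [x, y, z, w, p, q, r, s]"
proof -
  obtain n1 m1 n2 m2 where sites: "is_site ns L n1 m1" "is_site ns L n2 m2"
    and "distinct [cyc_at L n1, cyc_at L (Suc n1), cyc_at L m1, cyc_at L (Suc m1),
                   cyc_at L n2, cyc_at L (Suc n2), cyc_at L m2, cyc_at L (Suc m2)]"
    using assms(1) unfolding bisited_def by auto
  moreover have "(cyc_at L i, cyc_at L (Suc i)) \<in> cycle_edges L" for i
    using cycle_edges_iff_cyc_at[OF assms(2)] by blast
  ultimately show ?thesis
    unfolding is_site_iff_site_quad
    by (intro that[of "cyc_at L n1" "cyc_at L (Suc n1)" "cyc_at L m1" "cyc_at L (Suc m1)"
          "cyc_at L n2" "cyc_at L (Suc n2)" "cyc_at L m2" "cyc_at L (Suc m2)"]) simp_all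
qed

lemma bisitedI:
  assumes "{(x, y), (z, w), (p, q), (r, s)} \<subseteq> cycle_edges L"
    and "site_quad (length ns) x y z w" and "site_quad (length ns) p q r s"
    and "distinct [x, y, z, w, p, q, r, s]"
  shows "bisited ns L"
proof -
  have "L \<noteq> []"
    using assms(1) by auto
  then obtain n1 m1 n2 m2 where
    "cyc_at L n1 = x" "cyc_at L (Suc n1) = y" "cyc_at L m1 = z" "cyc_at L (Suc m1) = w"
    "cyc_at L n2 = p" "cyc_at L (Suc n2) = q" "cyc_at L m2 = r" "cyc_at L (Suc m2) = s"
    using assms(1) cycle_edges_iff_cyc_at by (metis insert_subset)
  then show ?thesis
    using assms(2-4) unfolding bisited_def is_site_iff_site_quad
    by (intro exI[of _ n1] exI[of _ m1] exI[of _ n2] exI[of _ m2]) simp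
qed

lemma bisited_two_layers:
  assumes site: "site_quad (length ns) p q r s" and "{p, q, r, s} \<subseteq> board ns"
    and "distinct [p, q, r, s]" and "t \<noteq> t'"
    and "{(lift t p, lift t q), (lift t r, lift t s)} \<subseteq> cycle_edges H"
    and "{(lift t' p, lift t' q), (lift t' r, lift t' s)} \<subseteq> cycle_edges H \<or>
         {(lift t' q, lift t' p), (lift t' s, lift t' r)} \<subseteq> cycle_edges H"
  shows "bisited (ns @ [K]) H"
  using assms(6)
proof
  note lifted = site_quad_lift[OF site assms(2), where K = K]
  assume "{(lift t' p, lift t' q), (lift t' r, lift t' s)} \<subseteq> cycle_edges H"
  then show ?thesis
    using assms(3-5) by (intro bisitedI[OF _ lifted(1)[where t = t] lifted(1)[where t = t']]) auto
next
  note lifted = site_quad_lift[OF site assms(2), where K = K]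
  assume "{(lift t' q, lift t' p), (lift t' s, lift t' r)} \<subseteq> cycle_edges H"
  then show ?thesis
    using assms(3-5) by (intro bisitedI[OF _ lifted(1)[where t = t] lifted(2)[where t = t']]) auto
qed

theorem proposition3p7:
  fixes ns :: "nat list" and k :: nat
  assumes "\<forall>x \<in> set ns. x > 0"
    and "has_bisited_ham_cycle ns"
    and "k \<ge> 2"
  shows "has_bisited_ham_cycle (ns @ [k])"
proof -
  obtain C where C: "ham_cycle ns C" "bisited ns C"
    using assms(2) unfolding has_bisited_ham_cycle_def by blast
  then obtain x y z w p q r s where edges: "{(x, y), (z, w), (p, q), (r, s)} \<subseteq> cycle_edges C"
    and sites: "site_quad (length ns) x y z w" "site_quad (length ns) p q r s"
    and dist: "distinct [x, y, z, w, p, q, r, s]"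
    by (elim bisitedE) (auto simp: ham_cycle_def)
  let ?E = "cycle_edges C - {(x, y), (z, w)}"
  obtain H where H: "ham_cycle (ns @ [k]) H"
    and bottom: "\<And>u v. (u, v) \<in> ?E \<Longrightarrow> (lift 1 u, lift 1 v) \<in> cycle_edges H"
    and top: "(\<forall>u v. (u, v) \<in> ?E \<longrightarrow> (lift k u, lift k v) \<in> cycle_edges H) \<or>
              (\<forall>u v. (u, v) \<in> ?E \<longrightarrow> (lift k v, lift k u) \<in> cycle_edges H)"
    by (rule layered_ham_cycle[OF C(1) _ _ sites(1) _ assms(3)]) (use edges dist in auto)
  have kept: "(p, q) \<in> ?E" "(r, s) \<in> ?E"
    using edges dist by auto
  have "{p, q, r, s} \<subseteq> board ns"
    using edges C(1) cycle_edges_subset[of C] by (auto simp: ham_cycle_def)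
  moreover have "{(lift 1 p, lift 1 q), (lift 1 r, lift 1 s)} \<subseteq> cycle_edges H"
    using bottom kept by blast
  moreover have "{(lift k p, lift k q), (lift k r, lift k s)} \<subseteq> cycle_edges H \<or>
      {(lift k q, lift k p), (lift k s, lift k r)} \<subseteq> cycle_edges H"
    using top kept by blast
  ultimately have "bisited (ns @ [k]) H"
    using dist assms(3) by (intro bisited_two_layers[OF sites(2), where t = 1 and t' = k]) auto
  with H show ?thesis
    unfolding has_bisited_ham_cycle_def by blast
qed

end
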